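(* Let $n\ge1$, $e=i_n$, and $x=(\bar x,x_n),\,y=(\bar y,y_n)\in Q_n$ with $\bar x,\bar y\in Q_{n-1}$, $x_n,y_n\in\{0,1\}$. Then for every $z\in Q_{n-1}$ (viewed in $Q_n$) we have $[y,x,ze]=[\bar x,\bar y]\,[y,x,z]$; equivalently, if $L_{x,y}(z)=\varepsilon z$ with $\varepsilon\in\{\pm1\}$, then $L_{x,y}(ze)=[\bar x,\bar y]\,\varepsilon\, ze$. Moreover $L_{x,e}=L_{xe,e}$ for all $x\in Q_n$.
   Context: Cayley--Dickson loops: $Q_0=\{1,-1\}\subset\mathbb{R}$ with conjugation $x^*=x$. For $n\ge1$, $Q_n=\{(x,0),(x,1)\mid x\in Q_{n-1}\}$ with multiplication $(x,0)(y,0)=(xy,0)$, $(x,0)(y,1)=(yx,1)$, $(x,1)(y,0)=(xy^*,1)$, $(x,1)(y,1)=(-y^*x,0)$ and conjugation $(x,0)^*=(x^*,0)$, $(x,1)^*=(-x,1)$, where $-(x,a)=(-x,a)$. $Q_n$ is a loop with neutral element $1=(1,0,\dots,0)$. $Q_{n-1}$ is identified with $\{(x,0)\}\subset Q_n$; $e=i_n=(1_{Q_{n-1}},1)$. Commutator $[x,y]$ defined by $xy=(yx)[x,y]$ and associator by $(xy)z=(x(yz))[x,y,z]$, both in $\{\pm1\}$. $L_x(a)=xa$, $L_{x,y}=L_{yx}^{-1}L_yL_x$; one has $L_{x,y}(z)=[y,x,z]z$. *)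

theory Defs
  imports Main
begin

text \<open>An element of Q_n is encoded as a pair (s, bs) with
  s a sign in {1,-1} and bs a bit list of length n; the head of bs is the
  outermost (last added) coordinate. Thus (x,a) in Q_n with x = (s,bs) in Q_(n-1)
  is (s, a # bs), and x in Q_(n-1) is identified with (x,0) = (s, False # bs).\<close>

type_synonym cd = "int \<times> bool list"

definition cdQ :: "nat \<Rightarrow> cd set" where
  "cdQ n = {(s, bs). (s = 1 \<or> s = -1) \<and> length bs = n}"

definition cdpair :: "cd \<Rightarrow> bool \<Rightarrow> cd" where
  "cdpair x a = (fst x, a # snd x)"

definition cdneg :: "cd \<Rightarrow> cd" where
  "cdneg x = (- fst x, snd x)"

definition cdsc :: "int \<Rightarrow> cd \<Rightarrow> cd" where
  "cdsc c x = (c * fst x, snd x)"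

fun cdconj :: "cd \<Rightarrow> cd" where
  "cdconj (s, []) = (s, [])"
| "cdconj (s, False # bs) = cdpair (cdconj (s, bs)) False"
| "cdconj (s, True # bs) = cdpair (cdneg (s, bs)) True"

fun cdmult :: "nat \<Rightarrow> cd \<Rightarrow> cd \<Rightarrow> cd" where
  "cdmult 0 x y = (fst x * fst y, [])"
| "cdmult (Suc n) x y =
     (let xb = (fst x, tl (snd x)); yb = (fst y, tl (snd y));
          a = hd (snd x); b = hd (snd y)
      in if \<not> a \<and> \<not> b then cdpair (cdmult n xb yb) False
         else if \<not> a \<and> b then cdpair (cdmult n yb xb) True
         else if a \<and> \<not> b then cdpair (cdmult n xb (cdconj yb)) True
         else cdpair (cdneg (cdmult n (cdconj yb) xb)) False)"

definition cdone :: "nat \<Rightarrow> cd" where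
  "cdone n = (1, replicate n False)"

definition cdi :: "nat \<Rightarrow> cd" where
  "cdi n = cdpair (cdone (n - 1)) True"

definition cdcomm :: "nat \<Rightarrow> cd \<Rightarrow> cd \<Rightarrow> int" where
  "cdcomm n x y = (THE c. (c = 1 \<or> c = -1) \<and> cdmult n x y = cdsc c (cdmult n y x))"

definition cdassoc :: "nat \<Rightarrow> cd \<Rightarrow> cd \<Rightarrow> cd \<Rightarrow> int" where
  "cdassoc n x y z = (THE c. (c = 1 \<or> c = -1) \<and>
     cdmult n (cdmult n x y) z = cdsc c (cdmult n x (cdmult n y z)))"

definition cdL :: "nat \<Rightarrow> cd \<Rightarrow> cd \<Rightarrow> cd" where
  "cdL n x = (\<lambda>a. cdmult n x a)"

definition cdLL :: "nat \<Rightarrow> cd \<Rightarrow> cd \<Rightarrow> cd \<Rightarrow> cd" where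
  "cdLL n x y = inv_into (cdQ n) (cdL n (cdmult n y x)) \<circ> cdL n y \<circ> cdL n x"

end

theory Submission
  imports Defs
begin

(* Q_m is a twisted group ring of the elementary abelian group (Z/2)^m:
   writing an element as (s, as) with a sign s and a bit list as, the product is
     (s, as) (t, bs) = (s t twist(as,bs), as XOR bs)
   for an explicit sign cocycle twist.  Consequently commutators and associators
   depend only on the bit lists:
     [x,y] = twist(as,bs) twist(bs,as),   [x,y,z] = twist_assoc(as,bs,cs),
   and L_{x,y}(z) = [y,x,z] z. *)

fun bxor :: "bool list \<Rightarrow> bool list \<Rightarrow> bool list" where
  "bxor (a # as) (b # bs) = (a \<noteq> b) # bxor as bs"
| "bxor _ _ = []"

lemma length_bxor [simp]: "length (bxor a b) = min (length a) (length b)"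
  by (induction a b rule: bxor.induct) auto

lemma bxor_comm: "bxor a b = bxor b a"
  by (induction a b rule: bxor.induct) auto

lemma bxor_assoc: "bxor (bxor a b) c = bxor a (bxor b c)"
proof (induction a arbitrary: b c)
  case (Cons x xs)
  then show ?case by (cases b; cases c) auto
qed simp

lemma bxor_cancel: "length a = length b \<Longrightarrow> bxor a (bxor a b) = b"
proof (induction a arbitrary: b)
  case (Cons x xs)
  then show ?case by (cases b) auto
qed simp

lemma bxor_zero_right: "bxor c (replicate (length c) False) = c"
  by (induction c) auto

lemma bxor_zero_left: "bxor (replicate (length c) False) c = c"
  by (induction c) auto

section \<open>Conjugation sign and the multiplication cocycle\<close>

text \<open>Conjugation fixes the identity part and negates every other basis element,
  so it acts by the sign -1 exactly on nonzero bit lists.\<close>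

definition conj_sign :: "bool list \<Rightarrow> int" where
  "conj_sign bs = (if True \<in> set bs then -1 else 1)"

lemma conj_sign_sq: "conj_sign x * conj_sign x = 1"
  by (simp add: conj_sign_def)

lemma conj_sign_pm: "conj_sign x = 1 \<or> conj_sign x = -1"
  by (simp add: conj_sign_def)

lemma conj_sign_zero [simp]: "conj_sign (replicate m False) = 1"
  by (simp add: conj_sign_def)

lemma conj_sign_Cons [simp]:
  "conj_sign (True # d) = -1" "conj_sign (False # d) = conj_sign d"
  by (simp_all add: conj_sign_def)

lemma cdconj_eq: "cdconj (s, bs) = (s * conj_sign bs, bs)"
proof (induction bs arbitrary: s)
  case Nil
  then show ?case by (simp add: conj_sign_def)
next
  case (Cons a bs)
  then show ?case by (cases a) (auto simp: cdpair_def cdneg_def)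
qed

text \<open>The sign picked up when multiplying the basis elements indexed by two bit
  lists; it follows the recursion defining the Cayley--Dickson product.\<close>

function twist :: "bool list \<Rightarrow> bool list \<Rightarrow> int" where
  "twist (a # as) (b # bs) =
     (if \<not> a \<and> \<not> b then twist as bs
      else if \<not> a \<and> b then twist bs as
      else if a \<and> \<not> b then conj_sign bs * twist as bs
      else - conj_sign bs * twist bs as)"
| "twist [] _ = 1"
| "twist (a # as) [] = 1"
  by pat_completeness auto
termination by (relation "measure (\<lambda>(x, y). length x + length y)") auto

lemma twist_pm: "twist a b = 1 \<or> twist a b = -1"
  by (induction a b rule: twist.induct) (auto simp: conj_sign_def)

lemma twist_sq: "twist a b * twist a b = 1"
  using twist_pm[of a b] by auto

lemma twist_zero_right: "twist d (replicate (length d) False) = 1"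
  by (induction d) auto

lemma twist_zero_left: "twist (replicate (length d) False) d = 1"
  by (induction d) (auto simp: twist_zero_right)

lemma mem_cdQ: "(s, bs) \<in> cdQ n \<longleftrightarrow> (s = 1 \<or> s = -1) \<and> length bs = n"
  by (simp add: cdQ_def)

text \<open>The closed form of the Cayley--Dickson product: Q_m is a twisted group ring of
  (Z/2)^m with cocycle twist.  Everything below is computed from this formula.\<close>

lemma cdmult_eq:
  "length as = m \<Longrightarrow> length bs = m \<Longrightarrow>
   cdmult m (s, as) (t, bs) = (s * t * twist as bs, bxor as bs)"
proof (induction m arbitrary: s t as bs)
  case (Suc m)
  then obtain a as' b bs' where e: "as = a # as'" "bs = b # bs'"
    and l: "length as' = m" "length bs' = m"
    by (metis length_Suc_conv)
  show ?case using Suc.IH[OF l] Suc.IH[OF l(2,1)] e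
    by (cases a; cases b) (auto simp: Let_def cdpair_def cdneg_def cdconj_eq bxor_comm algebra_simps)
qed simp

declare cdmult.simps(2) [simp del]

lemma cdmult_cdsc_right:
  assumes "length as = m" "length bs = m"
  shows "cdmult m (s, as) (cdsc c (t, bs)) = cdsc c (cdmult m (s, as) (t, bs))"
  using assms by (simp add: cdsc_def cdmult_eq)

section \<open>Closed formulas for commutator, associator and L_{x,y}\<close>

text \<open>The sign relating two elements with the same bit list is the ratio of their
  signs; this evaluates both THE-expressions defining [x,y] and [x,y,z].\<close>

lemma sign_ratio_eq:
  assumes "snd p = snd q" "fst p = c * fst q" "fst q \<noteq> 0" "c = 1 \<or> c = -1"
  shows "(THE c'. (c' = 1 \<or> c' = -1) \<and> p = cdsc c' q) = c"
proof (rule the_equality)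
  show "(c = 1 \<or> c = -1) \<and> p = cdsc c q"
    using assms by (simp add: cdsc_def prod_eq_iff)
next
  fix c' assume "(c' = 1 \<or> c' = -1) \<and> p = cdsc c' q"
  then have "c' * fst q = c * fst q" using assms(2) by (simp add: cdsc_def)
  with \<open>fst q \<noteq> 0\<close> show "c' = c" by simp
qed

definition twist_comm :: "bool list \<Rightarrow> bool list \<Rightarrow> int" where
  "twist_comm a b = twist a b * twist b a"

definition twist_assoc :: "bool list \<Rightarrow> bool list \<Rightarrow> bool list \<Rightarrow> int" where
  "twist_assoc a b c = twist a b * twist (bxor a b) c * twist b c * twist a (bxor b c)"

lemma twist_assoc_pm: "twist_assoc a b c = 1 \<or> twist_assoc a b c = -1"
  unfolding twist_assoc_def
  using twist_pm[of a b] twist_pm[of "bxor a b" c] twist_pm[of b c] twist_pm[of a "bxor b c"]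
  by auto

lemma twist_assoc_sq: "twist_assoc a b c * twist_assoc a b c = 1"
  using twist_assoc_pm[of a b c] by auto

lemma cdmult_assoc_twisted:
  assumes "length as = m" "length bs = m" "length cs = m"
  shows "cdmult m (cdmult m (s, as) (t, bs)) (u, cs)
           = cdsc (twist_assoc as bs cs) (cdmult m (s, as) (cdmult m (t, bs) (u, cs)))"
proof -
  have "twist_assoc as bs cs * (s * (t * u * twist bs cs) * twist as (bxor bs cs))
      = s * t * twist as bs * u * twist (bxor as bs) cs
        * (twist bs cs * twist bs cs) * (twist as (bxor bs cs) * twist as (bxor bs cs))"
    by (simp only: twist_assoc_def mult_ac)
  also have "\<dots> = s * t * twist as bs * u * twist (bxor as bs) cs"
    by (simp only: twist_sq mult_1_right)
  finally have sign: "s * t * twist as bs * u * twist (bxor as bs) cs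
      = twist_assoc as bs cs * (s * (t * u * twist bs cs) * twist as (bxor bs cs))" ..
  show ?thesis
    using assms sign by (simp only: cdmult_eq length_bxor min.idem cdsc_def fst_conv snd_conv bxor_assoc)
qed

lemma cdassoc_eq:
  assumes "length as = m" "length bs = m" "length cs = m" "s \<noteq> 0" "t \<noteq> 0" "u \<noteq> 0"
  shows "cdassoc m (s, as) (t, bs) (u, cs) = twist_assoc as bs cs"
  unfolding cdassoc_def
proof (rule sign_ratio_eq)
  let ?p = "cdmult m (cdmult m (s, as) (t, bs)) (u, cs)"
  let ?q = "cdmult m (s, as) (cdmult m (t, bs) (u, cs))"
  have "?p = cdsc (twist_assoc as bs cs) ?q"
    using assms(1-3) by (rule cdmult_assoc_twisted)
  then show "snd ?p = snd ?q" "fst ?p = twist_assoc as bs cs * fst ?q"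
    by (simp_all add: cdsc_def)
  show "fst ?q \<noteq> 0"
    using assms twist_pm[of bs cs] twist_pm[of as "bxor bs cs"] by (auto simp: cdmult_eq)
  show "twist_assoc as bs cs = 1 \<or> twist_assoc as bs cs = -1" by (rule twist_assoc_pm)
qed

lemma cdcomm_eq:
  assumes "length as = m" "length bs = m" "s \<noteq> 0" "t \<noteq> 0"
  shows "cdcomm m (s, as) (t, bs) = twist_comm as bs"
  unfolding cdcomm_def twist_comm_def
proof (rule sign_ratio_eq)
  let ?p = "cdmult m (s, as) (t, bs)" and ?q = "cdmult m (t, bs) (s, as)"
  have "s * t * twist as bs = twist as bs * twist bs as * (t * s * twist bs as)"
    using twist_sq[of bs as] by (simp add: mult_ac)
  then show "snd ?p = snd ?q" "fst ?p = twist as bs * twist bs as * fst ?q"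
    using assms by (simp_all add: cdmult_eq bxor_comm)
  show "fst ?q \<noteq> 0" using assms twist_pm[of bs as] by (auto simp: cdmult_eq)
  show "twist as bs * twist bs as = 1 \<or> twist as bs * twist bs as = -1"
    using twist_pm[of as bs] twist_pm[of bs as] by auto
qed

text \<open>Left translations are injective on Q_m, so L_{yx}^{-1} is a genuine inverse.\<close>

lemma cdL_inj_on:
  assumes "y \<in> cdQ m"
  shows "inj_on (cdL m y) (cdQ m)"
proof (rule inj_onI)
  fix p q assume "p \<in> cdQ m" "q \<in> cdQ m" and eq: "cdL m y p = cdL m y q"
  obtain s as where y: "y = (s, as)" "s = 1 \<or> s = -1" "length as = m"
    using assms by (cases y) (auto simp: mem_cdQ)
  obtain p1 p2 q1 q2 where pq: "p = (p1, p2)" "q = (q1, q2)" "length p2 = m" "length q2 = m"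
    using \<open>p \<in> cdQ m\<close> \<open>q \<in> cdQ m\<close> by (cases p; cases q) (auto simp: mem_cdQ)
  have "bxor as p2 = bxor as q2" and sgn: "s * p1 * twist as p2 = s * q1 * twist as q2"
    using eq y pq by (auto simp: cdL_def cdmult_eq)
  then have "p2 = q2" using bxor_cancel y(3) pq(3,4) by metis
  then show "p = q" using sgn y(2) twist_pm[of as q2] pq by auto
qed

lemma cdmult_closed:
  assumes "x \<in> cdQ m" "y \<in> cdQ m"
  shows "cdmult m x y \<in> cdQ m"
proof -
  obtain s as t bs where "x = (s, as)" "y = (t, bs)" "s = 1 \<or> s = -1" "t = 1 \<or> t = -1"
    "length as = m" "length bs = m"
    using assms by (cases x; cases y) (auto simp: mem_cdQ)
  then show ?thesis using twist_pm[of as bs] by (auto simp: mem_cdQ cdmult_eq)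
qed

lemma cdLL_eq:
  assumes "x \<in> cdQ m" "y \<in> cdQ m" "z \<in> cdQ m"
  shows "cdLL m x y z = cdsc (cdassoc m y x z) z"
proof -
  obtain s as where x: "x = (s, as)" "s = 1 \<or> s = -1" "length as = m"
    using assms(1) by (cases x) (auto simp: mem_cdQ)
  obtain t bs where y: "y = (t, bs)" "t = 1 \<or> t = -1" "length bs = m"
    using assms(2) by (cases y) (auto simp: mem_cdQ)
  obtain u cs where z: "z = (u, cs)" "u = 1 \<or> u = -1" "length cs = m"
    using assms(3) by (cases z) (auto simp: mem_cdQ)
  define c where "c = twist_assoc bs as cs"
  have c: "cdassoc m y x z = c"
    using x y z by (auto simp: c_def cdassoc_eq)
  have "cdmult m (cdmult m y x) (cdsc c z) = cdsc c (cdmult m (cdmult m y x) z)"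
    using x y z by (simp add: cdmult_eq cdmult_cdsc_right)
  also have "\<dots> = cdsc (c * c) (cdmult m y (cdmult m x z))"
    using x y z by (simp add: cdmult_assoc_twisted c_def cdsc_def)
  also have "\<dots> = cdmult m y (cdmult m x z)"
    by (simp add: c_def twist_assoc_sq cdsc_def)
  finally have "cdL m (cdmult m y x) (cdsc c z) = (cdL m y \<circ> cdL m x) z"
    by (simp add: cdL_def)
  moreover have "cdsc c z \<in> cdQ m"
    using z twist_assoc_pm[of bs as cs] by (auto simp: c_def cdsc_def mem_cdQ)
  ultimately show ?thesis
    unfolding cdLL_def c
    using inv_into_f_eq[OF cdL_inj_on[OF cdmult_closed[OF assms(2,1)]]] by simp
qed

section \<open>Two identities of the associator cocycle\<close>

text \<open>Two basis elements commute iff one of them or their product is the identity;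
  in sign form: [u,v] = conj_sign u * conj_sign v * conj_sign (u XOR v).\<close>

lemma twist_comm_eq:
  "length u = length v \<Longrightarrow> twist_comm u v = conj_sign u * conj_sign v * conj_sign (bxor u v)"
proof (induction u arbitrary: v)
  case Nil
  then show ?case by (simp add: twist_comm_def conj_sign_def)
next
  case (Cons a u)
  then obtain b v' where v: "v = b # v'" "length v' = length u" by (cases v) auto
  have IH: "twist u v' * twist v' u = conj_sign u * conj_sign v' * conj_sign (bxor u v')"
    using Cons v by (simp add: twist_comm_def)
  show ?case
  proof (cases a; cases b)
    assume "a" "b"
    then have "twist_comm (a # u) v = (conj_sign u * conj_sign v') * (twist u v' * twist v' u)"
      using v by (simp add: twist_comm_def mult_ac)
    also have "\<dots> = (conj_sign u * conj_sign u) * (conj_sign v' * conj_sign v') * conj_sign (bxor u v')"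
      using IH by (simp add: mult_ac)
    finally show ?thesis using v \<open>a\<close> \<open>b\<close> by (simp add: conj_sign_sq)
  next
    assume "a" "\<not> b"
    then show ?thesis using v twist_pm[of u v'] conj_sign_pm[of v'] by (auto simp: twist_comm_def)
  next
    assume "\<not> a" "b"
    then show ?thesis using v twist_pm[of v' u] conj_sign_pm[of u] by (auto simp: twist_comm_def)
  next
    assume "\<not> a" "\<not> b"
    then show ?thesis using v IH by (simp add: twist_comm_def)
  qed
qed

lemma twist_flip_second:
  "twist (\<delta> # d) (True # c) * twist (\<delta> # d) (False # c) = (if \<delta> then -1 else 1) * twist_comm d c"
  using twist_pm[of c d] twist_pm[of d c] conj_sign_pm[of c]
  by (cases \<delta>) (auto simp: twist_comm_def)

text \<open>Multiplying the associators at W = True # c and W = False # c, each factor pair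
  is a flip of twist_flip_second; the three resulting commutators combine, via
  twist_comm_eq, to the commutator of the lower parts.\<close>

lemma twist_assoc_flip_product:
  assumes "length a = m" "length b = m" "length c = m"
  shows "twist_assoc (\<beta> # a) (\<alpha> # b) (True # c) * twist_assoc (\<beta> # a) (\<alpha> # b) (False # c)
           = twist_comm a b"
proof -
  let ?Y = "\<beta> # a" and ?X = "\<alpha> # b" and ?W1 = "True # c" and ?W0 = "False # c"
  let ?sgn = "\<lambda>\<delta>. if \<delta> then -1 else (1::int)"
  have prod: "twist_assoc ?Y ?X ?W1 * twist_assoc ?Y ?X ?W0
      = (twist ?Y ?X * twist ?Y ?X) * (twist (bxor ?Y ?X) ?W1 * twist (bxor ?Y ?X) ?W0)
        * (twist ?X ?W1 * twist ?X ?W0) * (twist ?Y (bxor ?X ?W1) * twist ?Y (bxor ?X ?W0))"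
    by (simp only: twist_assoc_def mult_ac)
  have p1: "twist (bxor ?Y ?X) ?W1 * twist (bxor ?Y ?X) ?W0 = ?sgn (\<beta> \<noteq> \<alpha>) * twist_comm (bxor a b) c"
    by (simp only: bxor.simps twist_flip_second)
  have p2: "twist ?X ?W1 * twist ?X ?W0 = ?sgn \<alpha> * twist_comm b c"
    by (simp only: twist_flip_second)
  have p3: "twist ?Y (bxor ?X ?W1) * twist ?Y (bxor ?X ?W0) = ?sgn \<beta> * twist_comm a (bxor b c)"
    using twist_flip_second[of \<beta> a "bxor b c"] by (cases \<alpha>) (simp_all add: mult_ac)
  have signs: "?sgn (\<beta> \<noteq> \<alpha>) * ?sgn \<alpha> * ?sgn \<beta> = 1"
    by (cases \<alpha>; cases \<beta>) auto
  have comms: "twist_comm (bxor a b) c * twist_comm b c * twist_comm a (bxor b c)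
      = (conj_sign a * conj_sign b * conj_sign (bxor a b))
        * (conj_sign c * conj_sign c) * (conj_sign (bxor b c) * conj_sign (bxor b c))
        * (conj_sign (bxor a (bxor b c)) * conj_sign (bxor a (bxor b c)))"
    using assms by (simp add: twist_comm_eq bxor_assoc mult_ac)
  have "twist_assoc ?Y ?X ?W1 * twist_assoc ?Y ?X ?W0
      = (?sgn (\<beta> \<noteq> \<alpha>) * ?sgn \<alpha> * ?sgn \<beta>)
        * (twist_comm (bxor a b) c * twist_comm b c * twist_comm a (bxor b c))"
    unfolding prod p1 p2 p3 twist_sq by (simp only: mult_ac mult_1_left)
  also have "\<dots> = conj_sign a * conj_sign b * conj_sign (bxor a b)"
    unfolding signs comms by (simp only: conj_sign_sq mult_1_left mult_1_right)
  also have "\<dots> = twist_comm a b"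
    using assms by (simp add: twist_comm_eq)
  finally show ?thesis .
qed

lemma twist_assoc_flip_third:
  assumes "length a = m" "length b = m" "length c = m"
  shows "twist_assoc (\<beta> # a) (\<alpha> # b) (True # c)
           = twist_comm a b * twist_assoc (\<beta> # a) (\<alpha> # b) (False # c)"
proof -
  let ?A1 = "twist_assoc (\<beta> # a) (\<alpha> # b) (True # c)"
  let ?A0 = "twist_assoc (\<beta> # a) (\<alpha> # b) (False # c)"
  have "?A1 = (?A1 * ?A0) * ?A0"
    using twist_assoc_sq[of "\<beta> # a" "\<alpha> # b" "False # c"] by (simp add: mult.assoc)
  then show ?thesis using twist_assoc_flip_product[OF assms] by simp
qed

lemma twist_e:
  "length d = m \<Longrightarrow> twist (True # replicate m False) (\<delta> # d) = (if \<delta> then -1 else 1) * conj_sign d"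
  using twist_zero_left[of d] twist_zero_right[of d] by (cases \<delta>) auto

lemma twist_assoc_e_flip_second:
  assumes "length b = m" "length c = m"
  shows "twist_assoc (True # replicate m False) (\<alpha> # b) (\<gamma> # c)
           = twist_assoc (True # replicate m False) ((\<not> \<alpha>) # b) (\<gamma> # c)"
proof -
  have "bxor (replicate m False) b = b" using bxor_zero_left[of b] assms by simp
  moreover have "twist b (replicate m False) = 1" "twist (replicate m False) b = 1"
    "twist (bxor b c) (replicate m False) = 1" "twist (replicate m False) (bxor b c) = 1"
    using twist_zero_left[of b] twist_zero_right[of b]
      twist_zero_left[of "bxor b c"] twist_zero_right[of "bxor b c"] assms by auto
  ultimately show ?thesis
    unfolding twist_assoc_def using assms
    by (cases \<alpha>; cases \<gamma>) (simp_all add: twist_e mult_ac)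
qed

section \<open>The doubling step Q_m \<subseteq> Q_(m+1)\<close>

lemma cdi_Suc: "cdi (Suc m) = (1, True # replicate m False)"
  by (simp add: cdi_def cdpair_def cdone_def)

lemma cdmult_e:
  assumes "length cs = m"
  shows "cdmult (Suc m) (u, a # cs) (cdi (Suc m))
           = (u * twist (a # cs) (True # replicate m False), (\<not> a) # cs)"
  using assms bxor_zero_right[of cs] by (simp add: cdi_Suc cdmult_eq)

lemma cdpair_times_e:
  assumes "z \<in> cdQ m"
  shows "cdmult (Suc m) (cdpair z False) (cdi (Suc m)) = cdpair z True"
  using assms twist_zero_left[of "snd z"]
  by (cases z) (simp add: cdpair_def cdmult_e mem_cdQ)

lemma cdpair_mem: "z \<in> cdQ m \<Longrightarrow> cdpair z a \<in> cdQ (Suc m)"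
  by (cases z) (simp add: cdpair_def mem_cdQ)

lemma assoc_times_e:
  assumes "x \<in> cdQ m" "y \<in> cdQ m" "z \<in> cdQ m"
  shows "cdassoc (Suc m) (cdpair y yn) (cdpair x xn) (cdmult (Suc m) (cdpair z False) (cdi (Suc m)))
           = cdcomm m x y * cdassoc (Suc m) (cdpair y yn) (cdpair x xn) (cdpair z False)"
proof -
  obtain s as t bs u cs where xyz: "x = (s, as)" "y = (t, bs)" "z = (u, cs)"
    and signs: "s = 1 \<or> s = -1" "t = 1 \<or> t = -1" "u = 1 \<or> u = -1"
    and lengths: "length as = m" "length bs = m" "length cs = m"
    using assms by (cases x; cases y; cases z) (auto simp: mem_cdQ)
  have "cdcomm m x y = twist_comm bs as"
    using xyz signs lengths by (auto simp: cdcomm_eq twist_comm_def)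
  then show ?thesis
    unfolding cdpair_times_e[OF assms(3)]
    using xyz signs lengths twist_assoc_flip_third[OF lengths(2,1,3)]
    by (auto simp: cdpair_def cdassoc_eq)
qed

text \<open>Second statement: if L_{x,y}(z) = \<epsilon> z then L_{x,y}(ze) = [x,y] \<epsilon> ze;
  by cdLL_eq this is the first statement read through L_{x,y}(w) = [y,x,w] w.\<close>

lemma cdLL_times_e:
  assumes "x \<in> cdQ m" "y \<in> cdQ m" "z \<in> cdQ m"
    and "cdLL (Suc m) (cdpair x xn) (cdpair y yn) (cdpair z False) = cdsc \<epsilon> (cdpair z False)"
  shows "cdLL (Suc m) (cdpair x xn) (cdpair y yn) (cdmult (Suc m) (cdpair z False) (cdi (Suc m)))
           = cdsc (cdcomm m x y * \<epsilon>) (cdmult (Suc m) (cdpair z False) (cdi (Suc m)))"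
proof -
  note mem = cdpair_mem[OF assms(1)] cdpair_mem[OF assms(2)] cdpair_mem[OF assms(3)]
  have "cdsc (cdassoc (Suc m) (cdpair y yn) (cdpair x xn) (cdpair z False)) (cdpair z False)
      = cdsc \<epsilon> (cdpair z False)"
    using assms(4) cdLL_eq[OF mem] by simp
  moreover have "fst (cdpair z False) \<noteq> 0"
    using assms(3) by (cases z) (auto simp: cdpair_def mem_cdQ)
  ultimately have "cdassoc (Suc m) (cdpair y yn) (cdpair x xn) (cdpair z False) = \<epsilon>"
    by (simp add: cdsc_def)
  then show ?thesis
    using cdLL_eq[OF mem] assoc_times_e[OF assms(1-3)]
    unfolding cdpair_times_e[OF assms(3)] by simp
qed

text \<open>Third statement: L_{x,e} = L_{xe,e}, since xe only differs from x in the
  sign and the top bit, neither of which affects [e,x,z].\<close>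

lemma cdLL_e_invariant:
  assumes "x \<in> cdQ (Suc m)" "z \<in> cdQ (Suc m)"
  shows "cdLL (Suc m) x (cdi (Suc m)) z = cdLL (Suc m) (cdmult (Suc m) x (cdi (Suc m))) (cdi (Suc m)) z"
proof -
  obtain s \<alpha> b u \<gamma> c where xz: "x = (s, \<alpha> # b)" "z = (u, \<gamma> # c)"
    and signs: "s = 1 \<or> s = -1" "u = 1 \<or> u = -1" and lengths: "length b = m" "length c = m"
    using assms by (cases x; cases z) (auto simp: mem_cdQ length_Suc_conv)
  have e: "cdi (Suc m) \<in> cdQ (Suc m)" by (simp add: cdi_Suc mem_cdQ)
  have xe: "cdmult (Suc m) x (cdi (Suc m)) = (s * twist (\<alpha> # b) (True # replicate m False), (\<not> \<alpha>) # b)"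
    unfolding xz(1) using cdmult_e[OF lengths(1)] .
  have "s * twist (\<alpha> # b) (True # replicate m False) \<noteq> 0"
    using signs twist_pm[of "\<alpha> # b" "True # replicate m False"] by auto
  then have "cdassoc (Suc m) (cdi (Suc m)) (cdmult (Suc m) x (cdi (Suc m))) z
      = twist_assoc (True # replicate m False) ((\<not> \<alpha>) # b) (\<gamma> # c)"
    using xz signs lengths unfolding xe unfolding cdi_Suc xz(2) by (intro cdassoc_eq) auto
  moreover have "cdassoc (Suc m) (cdi (Suc m)) x z
      = twist_assoc (True # replicate m False) (\<alpha> # b) (\<gamma> # c)"
    using signs lengths unfolding cdi_Suc xz by (intro cdassoc_eq) auto
  ultimately show ?thesis
    unfolding cdLL_eq[OF assms(1) e assms(2)] cdLL_eq[OF cdmult_closed[OF assms(1) e] e assms(2)]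
    using twist_assoc_e_flip_second[OF lengths] by simp
qed

theorem mainTheorem14:
  fixes n :: nat and xb yb :: cd and xn yn :: bool
  assumes "1 \<le> n"
    and "xb \<in> cdQ (n - 1)" and "yb \<in> cdQ (n - 1)"
  shows "(\<forall>z \<in> cdQ (n - 1).
            cdassoc n (cdpair yb yn) (cdpair xb xn) (cdmult n (cdpair z False) (cdi n))
              = cdcomm (n - 1) xb yb * cdassoc n (cdpair yb yn) (cdpair xb xn) (cdpair z False))
       \<and> (\<forall>z \<in> cdQ (n - 1). \<forall>\<epsilon>::int. (\<epsilon> = 1 \<or> \<epsilon> = -1) \<longrightarrow>
            cdLL n (cdpair xb xn) (cdpair yb yn) (cdpair z False) = cdsc \<epsilon> (cdpair z False) \<longrightarrow>
            cdLL n (cdpair xb xn) (cdpair yb yn) (cdmult n (cdpair z False) (cdi n))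
              = cdsc (cdcomm (n - 1) xb yb * \<epsilon>) (cdmult n (cdpair z False) (cdi n)))
       \<and> (\<forall>x \<in> cdQ n. \<forall>z \<in> cdQ n.
            cdLL n x (cdi n) z = cdLL n (cdmult n x (cdi n)) (cdi n) z)"
proof -
  obtain m where n: "n = Suc m" using assms(1) by (cases n) auto
  then have x: "xb \<in> cdQ m" and y: "yb \<in> cdQ m" using assms(2,3) by simp_all
  show ?thesis
    unfolding n diff_Suc_1
    using assoc_times_e[OF x y] cdLL_times_e[OF x y] cdLL_e_invariant by blast
qed

end
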